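(* Fix $\alpha>0$. As $\Gamma\to\infty$, \[ 2\cdot\max\left\{ \sup_{0\leq\rho\leq1}\frac{\alpha E_{0}(\rho,\Gamma)}{\rho+\alpha},\ \sup_{\rho\geq1}\frac{\alpha E_{x}(\rho,\Gamma)}{\rho+\alpha}\right\} =[1+o(1)]\cdot\alpha\log(\Gamma), \] where $E_{0}(\rho,\Gamma)=\frac{1}{2}\left[(1-\beta_{0})(1+\rho)+\Gamma+\log\left(\beta_{0}-\frac{\Gamma}{1+\rho}\right)+\rho\log(\beta_{0})\right]$, $\beta_{0}=\frac{1}{2}\left(1+\frac{\Gamma}{1+\rho}\right)\left[1+\sqrt{1-\frac{4\Gamma\rho}{(1+\rho+\Gamma)^{2}}}\right]$, $E_{x}(\rho,\Gamma)=(1-\beta_{x})\rho+\frac{\Gamma}{2}+\frac{\rho}{2}\log\left[\beta_{x}\left(\beta_{x}-\frac{\Gamma}{2\rho}\right)\right]$, $\beta_{x}=\frac{1}{2}+\frac{\Gamma}{4\rho}+\frac{1}{2}\sqrt{1+\frac{\Gamma^{2}}{4\rho^{2}}}$.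
   Context: The left-hand side is the paper's achievability (lower) bound on the optimal MP$\alpha$E exponent per unit bandwidth $F_\alpha(\Gamma)$ for conveying a parameter over a band-limited AWGN channel at SNR $\Gamma$; $E_0$ and $E_x$ are Gallager's random-coding and expurgated functions for the Gaussian channel. Logarithms are natural. *)

theory Defs
  imports Complex_Main "HOL-Library.Landau_Symbols"
begin

text \<open>Gallager's random-coding exponent for the Gaussian channel (natural logs).\<close>
definition beta0 :: "real \<Rightarrow> real \<Rightarrow> real" where
  "beta0 \<rho> \<Gamma> = (1/2) * (1 + \<Gamma> / (1 + \<rho>)) *
      (1 + sqrt (1 - 4 * \<Gamma> * \<rho> / (1 + \<rho> + \<Gamma>)^2))"

definition E0 :: "real \<Rightarrow> real \<Rightarrow> real" where
  "E0 \<rho> \<Gamma> = (1/2) * ((1 - beta0 \<rho> \<Gamma>) * (1 + \<rho>) + \<Gamma>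
      + ln (beta0 \<rho> \<Gamma> - \<Gamma> / (1 + \<rho>)) + \<rho> * ln (beta0 \<rho> \<Gamma>))"

definition betax :: "real \<Rightarrow> real \<Rightarrow> real" where
  "betax \<rho> \<Gamma> = 1/2 + \<Gamma> / (4 * \<rho>) + (1/2) * sqrt (1 + \<Gamma>^2 / (4 * \<rho>^2))"

definition Ex :: "real \<Rightarrow> real \<Rightarrow> real" where
  "Ex \<rho> \<Gamma> = (1 - betax \<rho> \<Gamma>) * \<rho> + \<Gamma> / 2
      + (\<rho> / 2) * ln (betax \<rho> \<Gamma> * (betax \<rho> \<Gamma> - \<Gamma> / (2 * \<rho>)))"

text \<open>The achievability (lower) bound on the MP-alpha-E exponent per unit bandwidth.\<close>
definition F_lower :: "real \<Rightarrow> real \<Rightarrow> real" where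
  "F_lower \<alpha> \<Gamma> = 2 * max (SUP \<rho>\<in>{0..1}. \<alpha> * E0 \<rho> \<Gamma> / (\<rho> + \<alpha>))
                             (SUP \<rho>\<in>{1..}. \<alpha> * Ex \<rho> \<Gamma> / (\<rho> + \<alpha>))"

end

theory Submission
  imports Defs "HOL-Real_Asymp.Real_Asymp"
begin

text \<open>
  Both exponents grow like \<open>(\<rho>/2) ln \<Gamma>\<close>: up to bounded terms, \<open>E0 \<rho> \<Gamma>\<close> and
  \<open>Ex \<rho> \<Gamma>\<close> lie between \<open>(\<rho>/2) ln (\<Gamma>/(4\<rho>))\<close> and \<open>(\<rho>/2) ln (1 + \<Gamma>)\<close>.
  Since the weight \<open>\<alpha>\<rho>/(\<rho>+\<alpha>)\<close> stays below \<open>\<alpha>\<close> uniformly in \<open>\<rho>\<close>, the upper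
  bound gives \<open>F_lower \<alpha> \<Gamma> \<le> \<alpha> ln \<Gamma> + O(1)\<close>. For the lower bound, evaluating the
  expurgated term at \<open>\<rho> = ln \<Gamma>\<close> makes the weight tend to \<open>\<alpha>\<close> and
  \<open>ln (\<Gamma>/(4\<rho>))/ln \<Gamma>\<close> tend to \<open>1\<close>.
\<close>

lemma betax_eq:
  assumes "\<rho> > 0"
  shows "betax \<rho> \<Gamma> = (1 + \<Gamma> / (2*\<rho>) + sqrt (1 + (\<Gamma> / (2*\<rho>))\<^sup>2)) / 2"
  unfolding betax_def using assms by (simp add: power_divide field_simps)

lemma Ex_eq:
  fixes \<rho> \<Gamma> :: real
  assumes "\<rho> > 0"
  defines "t \<equiv> \<Gamma> / (2*\<rho>)"
  defines "s \<equiv> sqrt (1 + t\<^sup>2)"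
  shows "Ex \<rho> \<Gamma> = \<rho> / 2 * (1 + t - s + ln ((1 + s) / 2))"
proof -
  have beta: "betax \<rho> \<Gamma> = (1 + t + s) / 2"
    unfolding betax_eq[OF assms(1)] s_def t_def ..
  have "s\<^sup>2 = 1 + t\<^sup>2"
    unfolding s_def by simp
  then have product: "betax \<rho> \<Gamma> * (betax \<rho> \<Gamma> - \<Gamma> / (2*\<rho>)) = (1 + s) / 2"
    unfolding beta t_def[symmetric] by (simp add: field_simps power2_eq_square)
  have "\<Gamma> / 2 = \<rho> * t"
    unfolding t_def using assms(1) by simp
  then show ?thesis
    unfolding Ex_def product unfolding beta by (simp add: field_simps)
qed

lemma Ex_le:
  assumes "\<rho> \<ge> 1" "\<Gamma> \<ge> 0"
  shows "Ex \<rho> \<Gamma> \<le> \<rho> / 2 * (1 + ln (1 + \<Gamma>))"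
proof -
  define t where "t = \<Gamma> / (2*\<rho>)"
  define s where "s = sqrt (1 + t\<^sup>2)"
  have "\<rho> > 0"
    using assms by simp
  have "\<Gamma> \<le> \<Gamma> * (2*\<rho>)"
    using assms by (simp add: mult_le_cancel_left1)
  then have "t \<ge> 0" "t \<le> \<Gamma>"
    unfolding t_def using assms by (auto simp: field_simps)
  moreover have "t \<le> s"
    unfolding s_def by (rule real_le_rsqrt) simp
  moreover have "s \<le> 1 + t"
    unfolding s_def using \<open>t \<ge> 0\<close> by (intro real_le_lsqrt) (auto simp: power2_eq_square algebra_simps)
  ultimately have "ln ((1 + s) / 2) \<le> ln (1 + \<Gamma>)" "1 + t - s \<le> 1"
    by simp_all
  then have "1 + t - s + ln ((1 + s) / 2) \<le> 1 + ln (1 + \<Gamma>)"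
    by linarith
  then show ?thesis
    unfolding Ex_eq[OF \<open>\<rho> > 0\<close>] using assms by (simp flip: s_def t_def)
qed

lemma Ex_ge:
  assumes "\<rho> > 0" "\<Gamma> > 0"
  shows "\<rho> / 2 * ln (\<Gamma> / (4*\<rho>)) \<le> Ex \<rho> \<Gamma>"
proof -
  define t where "t = \<Gamma> / (2*\<rho>)"
  define s where "s = sqrt (1 + t\<^sup>2)"
  have "t > 0"
    unfolding t_def using assms by simp
  moreover have "t \<le> s"
    unfolding s_def by (rule real_le_rsqrt) simp
  moreover have "s \<le> 1 + t"
    unfolding s_def using \<open>t > 0\<close> by (intro real_le_lsqrt) (auto simp: power2_eq_square algebra_simps)
  moreover have "\<Gamma> / (4*\<rho>) = t / 2"
    unfolding t_def by simp
  ultimately have "ln (\<Gamma> / (4*\<rho>)) \<le> ln ((1 + s) / 2)" "0 \<le> 1 + t - s"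
    by simp_all
  then have "ln (\<Gamma> / (4*\<rho>)) \<le> 1 + t - s + ln ((1 + s) / 2)"
    by linarith
  then show ?thesis
    unfolding Ex_eq[OF assms(1)] using assms by (simp flip: s_def t_def)
qed

lemma beta0_eq:
  fixes \<rho> \<Gamma> :: real
  assumes "\<rho> \<ge> 0" "\<Gamma> \<ge> 0"
  defines "a \<equiv> 1 + \<rho>"
  defines "D \<equiv> sqrt ((\<Gamma> - a)\<^sup>2 + 4*\<Gamma>)"
  shows "beta0 \<rho> \<Gamma> = (a + \<Gamma> + D) / (2*a)"
proof -
  have pos: "a > 0" "a + \<Gamma> > 0"
    unfolding a_def using assms by auto
  have "(a + \<Gamma>)\<^sup>2 - 4 * \<Gamma> * \<rho> = (\<Gamma> - a)\<^sup>2 + 4*\<Gamma>"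
    unfolding a_def by (simp add: power2_eq_square algebra_simps)
  moreover have "1 - 4 * \<Gamma> * \<rho> / (a + \<Gamma>)\<^sup>2 = ((a + \<Gamma>)\<^sup>2 - 4 * \<Gamma> * \<rho>) / (a + \<Gamma>)\<^sup>2"
    using pos by (simp add: field_simps)
  ultimately have "1 - 4 * \<Gamma> * \<rho> / (a + \<Gamma>)\<^sup>2 = ((\<Gamma> - a)\<^sup>2 + 4*\<Gamma>) / (a + \<Gamma>)\<^sup>2"
    by simp
  then have "sqrt (1 - 4 * \<Gamma> * \<rho> / (a + \<Gamma>)\<^sup>2) = D / (a + \<Gamma>)"
    unfolding D_def using pos by (simp add: real_sqrt_divide)
  then show ?thesis
    unfolding beta0_def a_def[symmetric] add.assoc[symmetric] using pos
    by (simp add: field_simps)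
qed

lemma E0_le:
  assumes "\<rho> \<ge> 0" "\<Gamma> > 0"
  shows "E0 \<rho> \<Gamma> \<le> (1 + \<rho>) / 2 + \<rho> / 2 * ln (1 + \<Gamma>)"
proof -
  define a where "a = 1 + \<rho>"
  define D where "D = sqrt ((\<Gamma> - a)\<^sup>2 + 4*\<Gamma>)"
  have beta: "beta0 \<rho> \<Gamma> = (a + \<Gamma> + D) / (2*a)"
    unfolding a_def D_def using assms by (intro beta0_eq) auto
  have a: "a \<ge> 1"
    unfolding a_def using assms by simp
  have "D \<le> a + \<Gamma>"
    unfolding D_def using a assms
    by (intro real_le_lsqrt) (auto simp: power2_eq_square algebra_simps)
  have "D > \<bar>\<Gamma> - a\<bar>"
    unfolding D_def using assms by (intro real_less_rsqrt) simp
  have "(1 - beta0 \<rho> \<Gamma>) * (1 + \<rho>) + \<Gamma> = (a + \<Gamma> - D) / 2"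
    unfolding beta a_def[symmetric] using a by (simp add: field_simps)
  also have "\<dots> \<le> a"
    using \<open>D > \<bar>\<Gamma> - a\<bar>\<close> by simp
  finally have first: "(1 - beta0 \<rho> \<Gamma>) * (1 + \<rho>) + \<Gamma> \<le> a" .
  have "beta0 \<rho> \<Gamma> - \<Gamma> / (1 + \<rho>) = (a - \<Gamma> + D) / (2*a)"
    unfolding beta a_def[symmetric] using a by (simp add: field_simps)
  moreover have "0 < (a - \<Gamma> + D) / (2*a)" "(a - \<Gamma> + D) / (2*a) \<le> 1"
    using \<open>D \<le> a + \<Gamma>\<close> \<open>D > \<bar>\<Gamma> - a\<bar>\<close> a by (auto simp: field_simps)
  ultimately have second: "ln (beta0 \<rho> \<Gamma> - \<Gamma> / (1 + \<rho>)) \<le> 0"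
    by simp
  have "\<Gamma> \<le> \<Gamma> * a"
    using a assms(2) by simp
  then have "a + \<Gamma> + D \<le> (1 + \<Gamma>) * (2*a)"
    using \<open>D \<le> a + \<Gamma>\<close> by (simp add: algebra_simps)
  then have "beta0 \<rho> \<Gamma> \<le> 1 + \<Gamma>"
    unfolding beta using a by (simp add: pos_divide_le_eq)
  moreover have "beta0 \<rho> \<Gamma> > 0"
    unfolding beta using a \<open>D > \<bar>\<Gamma> - a\<bar>\<close> assms(2) by simp
  ultimately have third: "\<rho> / 2 * ln (beta0 \<rho> \<Gamma>) \<le> \<rho> / 2 * ln (1 + \<Gamma>)"
    using assms by (intro mult_left_mono) auto
  have "E0 \<rho> \<Gamma> = ((1 - beta0 \<rho> \<Gamma>) * (1 + \<rho>) + \<Gamma>) / 2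
      + ln (beta0 \<rho> \<Gamma> - \<Gamma> / (1 + \<rho>)) / 2 + \<rho> / 2 * ln (beta0 \<rho> \<Gamma>)"
    unfolding E0_def by simp
  with first second third show ?thesis
    unfolding a_def by argo
qed

lemma weighted_exponent_le:
  fixes \<alpha> \<rho> E L :: real
  assumes "\<alpha> > 0" "\<rho> \<ge> 0" "L \<ge> 0" "E \<le> (1 + \<rho>) / 2 + \<rho> / 2 * L"
  shows "\<alpha> * E / (\<rho> + \<alpha>) \<le> (1 + \<alpha>) / 2 + \<alpha> / 2 * L"
proof -
  have "\<alpha> * E \<le> \<alpha> * ((1 + \<rho>) / 2 + \<rho> / 2 * L)"
    using assms by (intro mult_left_mono) auto
  also have "\<dots> \<le> ((1 + \<alpha>) / 2 + \<alpha> / 2 * L) * (\<rho> + \<alpha>)"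
  proof -
    have "((1 + \<alpha>) / 2 + \<alpha> / 2 * L) * (\<rho> + \<alpha>) - \<alpha> * ((1 + \<rho>) / 2 + \<rho> / 2 * L)
        = (\<rho> + \<alpha> * \<alpha> + \<alpha> * \<alpha> * L) / 2"
      by (simp add: field_simps)
    moreover have "0 \<le> \<rho> + \<alpha> * \<alpha> + \<alpha> * \<alpha> * L"
      using assms by simp
    ultimately show ?thesis
      by argo
  qed
  finally show ?thesis
    using assms by (simp add: pos_divide_le_eq)
qed

lemma E0_weighted_le:
  assumes "\<alpha> > 0" "\<Gamma> > 0" "\<rho> \<ge> 0"
  shows "\<alpha> * E0 \<rho> \<Gamma> / (\<rho> + \<alpha>) \<le> (1 + \<alpha>) / 2 + \<alpha> / 2 * ln (1 + \<Gamma>)"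
  using assms E0_le[of \<rho> \<Gamma>] by (intro weighted_exponent_le) auto

lemma Ex_weighted_le:
  assumes "\<alpha> > 0" "\<Gamma> > 0" "\<rho> \<ge> 1"
  shows "\<alpha> * Ex \<rho> \<Gamma> / (\<rho> + \<alpha>) \<le> (1 + \<alpha>) / 2 + \<alpha> / 2 * ln (1 + \<Gamma>)"
  using assms Ex_le[of \<rho> \<Gamma>] by (intro weighted_exponent_le) (auto simp: field_simps)

lemma F_lower_le:
  assumes "\<alpha> > 0" "\<Gamma> > 0"
  shows "F_lower \<alpha> \<Gamma> \<le> 1 + \<alpha> + \<alpha> * ln (1 + \<Gamma>)"
proof -
  have "(SUP \<rho>\<in>{0..1}. \<alpha> * E0 \<rho> \<Gamma> / (\<rho> + \<alpha>)) \<le> (1 + \<alpha>) / 2 + \<alpha> / 2 * ln (1 + \<Gamma>)"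
    using assms by (intro cSUP_least E0_weighted_le) auto
  moreover have "(SUP \<rho>\<in>{1..}. \<alpha> * Ex \<rho> \<Gamma> / (\<rho> + \<alpha>)) \<le> (1 + \<alpha>) / 2 + \<alpha> / 2 * ln (1 + \<Gamma>)"
    using assms by (intro cSUP_least Ex_weighted_le) auto
  ultimately show ?thesis
    unfolding F_lower_def by (simp add: field_simps)
qed

lemma F_lower_ge:
  assumes "\<alpha> > 0" "\<Gamma> > 0" "\<rho> \<ge> 1"
  shows "\<alpha> * \<rho> / (\<rho> + \<alpha>) * ln (\<Gamma> / (4*\<rho>)) \<le> F_lower \<alpha> \<Gamma>"
proof -
  have "bdd_above ((\<lambda>\<rho>. \<alpha> * Ex \<rho> \<Gamma> / (\<rho> + \<alpha>)) ` {1..})"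
    using Ex_weighted_le[OF assms(1,2)] by (intro bdd_aboveI2) auto
  then have "\<alpha> * Ex \<rho> \<Gamma> / (\<rho> + \<alpha>) \<le> (SUP \<rho>\<in>{1..}. \<alpha> * Ex \<rho> \<Gamma> / (\<rho> + \<alpha>))"
    using assms(3) by (intro cSUP_upper) auto
  moreover have "\<alpha> * (\<rho> / 2 * ln (\<Gamma> / (4*\<rho>))) / (\<rho> + \<alpha>) \<le> \<alpha> * Ex \<rho> \<Gamma> / (\<rho> + \<alpha>)"
    using Ex_ge[of \<rho> \<Gamma>] assms by (intro divide_right_mono mult_left_mono) auto
  moreover have "\<alpha> * (\<rho> / 2 * ln (\<Gamma> / (4*\<rho>))) / (\<rho> + \<alpha>)
      = \<alpha> * \<rho> / (\<rho> + \<alpha>) * ln (\<Gamma> / (4*\<rho>)) / 2"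
    by (simp add: algebra_simps)
  moreover have "(SUP \<rho>\<in>{1..}. \<alpha> * Ex \<rho> \<Gamma> / (\<rho> + \<alpha>))
      \<le> max (SUP \<rho>\<in>{0..1}. \<alpha> * E0 \<rho> \<Gamma> / (\<rho> + \<alpha>)) (SUP \<rho>\<in>{1..}. \<alpha> * Ex \<rho> \<Gamma> / (\<rho> + \<alpha>))"
    by (rule max.cobounded2)
  ultimately show ?thesis
    unfolding F_lower_def by argo
qed

theorem mainTheorem6:
  fixes \<alpha> :: real
  assumes "\<alpha> > 0"
  shows "(\<lambda>\<Gamma>. F_lower \<alpha> \<Gamma>) \<sim>[at_top] (\<lambda>\<Gamma>. \<alpha> * ln \<Gamma>)"
proof (rule asymp_equiv_sandwich_real)
  show "(\<lambda>\<Gamma>. \<alpha> * ln \<Gamma> / (ln \<Gamma> + \<alpha>) * ln (\<Gamma> / (4 * ln \<Gamma>))) \<sim>[at_top] (\<lambda>\<Gamma>. \<alpha> * ln \<Gamma>)"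
    using assms by real_asymp
  show "(\<lambda>\<Gamma>. 1 + \<alpha> + \<alpha> * ln (1 + \<Gamma>)) \<sim>[at_top] (\<lambda>\<Gamma>. \<alpha> * ln \<Gamma>)"
    using assms by real_asymp
  have "eventually (\<lambda>\<Gamma>::real. \<Gamma> \<ge> exp 1) at_top"
    by (rule eventually_ge_at_top)
  then show "\<forall>\<^sub>F \<Gamma> in at_top. F_lower \<alpha> \<Gamma> \<in>
      {\<alpha> * ln \<Gamma> / (ln \<Gamma> + \<alpha>) * ln (\<Gamma> / (4 * ln \<Gamma>)) .. 1 + \<alpha> + \<alpha> * ln (1 + \<Gamma>)}"
  proof eventually_elim
    case (elim \<Gamma>)
    then have "\<Gamma> > 0" "ln \<Gamma> \<ge> 1"
      using exp_gt_zero less_le_trans ln_ge_iff by blast+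
    then show ?case
      using F_lower_ge[OF assms, of \<Gamma> "ln \<Gamma>"] F_lower_le[OF assms] by simp
  qed
qed

end
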